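(* Suppose the density $f$ is unimodal and the noise has a unimodal failure rate; let $r^*_0\in\arg\max\{B_r/r:1\le r\le n-1\}$ and $\hat r=\max\{r:\beta_r>0\}$. Let $M^*(\theta)=\max_{{\bf v}\in\mathcal V}M({\bf v},\theta)=\max_{1\le r\le n-1}A_r(\theta)$ and let $x^{**}(\theta)$ be the equilibrium effort under optimal prizes, i.e. $c'(x^{**}(\theta))=M^*(\theta)$. Then: (i) If $\hat r\le\lfloor n/2\rfloor$, then $M^*(\theta)$, and hence $x^{**}(\theta)$, is nonincreasing in $\theta\in[0,1]$. (ii) If $r^*_0>\lceil n/2\rceil$, then $M^*(\theta)$, and hence $x^{**}(\theta)$, is increasing in $\theta\in[0,1]$. (iii) If $\hat r>\lceil n/2\rceil$, then there exists $\bar\theta<1$ such that $M^*(\theta)$, and hence $x^{**}(\theta)$, is increasing in $\theta$ on $[\bar\theta,1]$.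
   Context: Fix an integer $n\ge 2$ and a noise distribution with cdf $F$ and density $f$ on $\mathbb R$ (integrals finite). For $r=1,\dots,n$ let $g_r(u)=u^{n-r}(1-u)^{r-1}$ and $\beta_r=\binom{n-1}{r-1}\int g_r'(F(t))f(t)^2dt$; $B_r=\sum_{k=1}^r\beta_k$, which for $1\le r\le n-1$ equals $r\binom{n-1}{r}\int F(t)^{n-1-r}[1-F(t)]^{r-1}f(t)^2dt>0$. Let $\mathcal V=\{{\bf v}\in\mathbb R^n: v_1\ge\dots\ge v_n\ge 0,\ \sum_r v_r=1\}$, $R({\bf v})=\sum_r\beta_rv_r$, $L({\bf v})=-\frac1n\sum_{r=1}^n\sum_{s<r}(\beta_r+\beta_s)(v_s-v_r)$, $M({\bf v},\theta)=R({\bf v})+\theta L({\bf v})$ for $\theta\in[0,1]$, and $A_r(\theta)=\big[1+\theta\big(\frac{2r}{n}-1\big)\big]\frac{B_r}{r}$ for $1\le r\le n-1$. The effort cost $c$ is strictly increasing, differentiable and strictly convex on $[0,\bar x]$, $\bar x=c^{-1}(1)$, with $c(0)=c'(0)=0$. The failure rate is $h=f/(1-F)$; a function is unimodal if it is (weakly) first increasing then decreasing (monotone functions included); the noise has a unimodal failure rate if $h$ is unimodal. *)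

theory Defs
  imports "HOL-Analysis.Analysis"
begin

definition gfun :: "nat \<Rightarrow> nat \<Rightarrow> real \<Rightarrow> real" where
  "gfun n r u = u ^ (n - r) * (1 - u) ^ (r - 1)"

definition beta :: "nat \<Rightarrow> (real \<Rightarrow> real) \<Rightarrow> (real \<Rightarrow> real) \<Rightarrow> nat \<Rightarrow> real" where
  "beta n F f r = real ((n - 1) choose (r - 1)) *
     (LINT t|lborel. deriv (gfun n r) (F t) * (f t)\<^sup>2)"

definition Bsum :: "nat \<Rightarrow> (real \<Rightarrow> real) \<Rightarrow> (real \<Rightarrow> real) \<Rightarrow> nat \<Rightarrow> real" where
  "Bsum n F f r = (\<Sum>k=1..r. beta n F f k)"

text \<open>Vectors v in R^n are functions nat => real, only the entries 1..n matter.\<close>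
definition Vset :: "nat \<Rightarrow> (nat \<Rightarrow> real) set" where
  "Vset n = {v. (\<forall>r\<in>{1..<n}. v (r + 1) \<le> v r) \<and> 0 \<le> v n \<and> (\<Sum>r=1..n. v r) = 1}"

definition Rfun :: "nat \<Rightarrow> (real \<Rightarrow> real) \<Rightarrow> (real \<Rightarrow> real) \<Rightarrow> (nat \<Rightarrow> real) \<Rightarrow> real" where
  "Rfun n F f v = (\<Sum>r=1..n. beta n F f r * v r)"

definition Lfun :: "nat \<Rightarrow> (real \<Rightarrow> real) \<Rightarrow> (real \<Rightarrow> real) \<Rightarrow> (nat \<Rightarrow> real) \<Rightarrow> real" where
  "Lfun n F f v = - (1 / real n) *
     (\<Sum>r=1..n. \<Sum>s\<in>{1..<r}. (beta n F f r + beta n F f s) * (v s - v r))"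

definition Mfun :: "nat \<Rightarrow> (real \<Rightarrow> real) \<Rightarrow> (real \<Rightarrow> real) \<Rightarrow> (nat \<Rightarrow> real) \<Rightarrow> real \<Rightarrow> real" where
  "Mfun n F f v \<theta> = Rfun n F f v + \<theta> * Lfun n F f v"

definition Mstar :: "nat \<Rightarrow> (real \<Rightarrow> real) \<Rightarrow> (real \<Rightarrow> real) \<Rightarrow> real \<Rightarrow> real" where
  "Mstar n F f \<theta> = (SUP v\<in>Vset n. Mfun n F f v \<theta>)"

definition Afun :: "nat \<Rightarrow> (real \<Rightarrow> real) \<Rightarrow> (real \<Rightarrow> real) \<Rightarrow> nat \<Rightarrow> real \<Rightarrow> real" where
  "Afun n F f r \<theta> = (1 + \<theta> * (2 * real r / real n - 1)) * (Bsum n F f r / real r)"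

definition unimodal_on :: "real set \<Rightarrow> (real \<Rightarrow> real) \<Rightarrow> bool" where
  "unimodal_on S h \<longleftrightarrow>
     (\<exists>m. (\<forall>x\<in>S. \<forall>y\<in>S. x \<le> y \<and> y \<le> m \<longrightarrow> h x \<le> h y) \<and>
          (\<forall>x\<in>S. \<forall>y\<in>S. m \<le> x \<and> x \<le> y \<longrightarrow> h y \<le> h x))
     \<or> mono_on S h \<or> antimono_on S h"

definition failure_rate :: "(real \<Rightarrow> real) \<Rightarrow> (real \<Rightarrow> real) \<Rightarrow> real \<Rightarrow> real" where
  "failure_rate F f t = f t / (1 - F t)"

definition strictly_convex_on :: "real set \<Rightarrow> (real \<Rightarrow> real) \<Rightarrow> bool" where
  "strictly_convex_on S c \<longleftrightarrow>
     (\<forall>x\<in>S. \<forall>y\<in>S. \<forall>t::real. x \<noteq> y \<and> 0 < t \<and> t < 1 \<longrightarrow>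
        c ((1 - t) * x + t * y) < (1 - t) * c x + t * c y)"

end

theory Submission
  imports Defs "HOL-Probability.Probability"
begin

text \<open>
  Since \<open>\<beta>\<^sub>r = C(n-1,r-1) \<integral> g\<^sub>r'(F) f\<^sup>2\<close>, the partial sums telescope to
  \<open>B\<^sub>r = (n-1) C(n-2,r-1) \<integral> F\<^bsup>n-1-r\<^esup> (1-F)\<^bsup>r-1\<^esup> f\<^sup>2 \<ge> 0\<close>, with \<open>B\<^sub>n = 0\<close> and some \<open>B\<^sub>r > 0\<close>.
  \<open>M(\<cdot>, \<theta>)\<close> is linear on \<open>\<V>\<close>, whose extreme points are the equal-prize vectors, so
  \<open>M\<^sup>*(\<theta>) = max\<^sub>r A\<^sub>r(\<theta>)\<close>, and \<open>A\<^sub>r\<close> is affine in \<open>\<theta>\<close> with a slope of the sign of \<open>2r - n\<close>.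

  Unimodality of \<open>f\<close> makes \<open>\<beta>\<close> single-crossing: writing \<open>f\<^sup>2\<close> as a layer cake over the
  superlevel sets of \<open>f\<close>, which are intervals around the mode, and substituting \<open>u = F t\<close> on each
  of them shows \<open>\<integral> H'(F) f\<^sup>2 \<ge> 0\<close> whenever \<open>H\<close> changes sign from \<open>-\<close> to \<open>+\<close> at the value of \<open>F\<close>
  at the mode. A suitable combination of \<open>g\<^sub>j\<close> and \<open>g\<^sub>k\<close> then gives \<open>\<beta>\<^sub>j \<ge> 0\<close> for \<open>j < k\<close>
  whenever \<open>\<beta>\<^sub>k > 0\<close>, so \<open>B\<^sub>r\<close> peaks at the last positive \<open>\<beta>\<close>. Comparing the lines \<open>A\<^sub>r\<close>
  gives the three cases, and \<open>x\<^sup>*\<^sup>*\<close> inherits the monotonicity of \<open>M\<^sup>*\<close> because \<open>c'\<close> is strictly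
  increasing.
\<close>

definition dgfun :: "nat \<Rightarrow> nat \<Rightarrow> real \<Rightarrow> real" where
  "dgfun n r u = real (n - r) * u ^ (n - r - 1) * (1 - u) ^ (r - 1)
                 - real (r - 1) * u ^ (n - r) * (1 - u) ^ (r - 2)"

text \<open>The truncated exponents in \<open>dgfun\<close> are harmless: they only occur next to a vanishing
  coefficient.\<close>

lemma has_real_derivative_gfun: "(gfun n r has_real_derivative dgfun n r u) (at u)"
  unfolding gfun_def dgfun_def
  by (auto intro!: derivative_eq_intros simp: algebra_simps numeral_2_eq_2)

lemma deriv_gfun: "deriv (gfun n r) = dgfun n r"
  by (rule ext, rule DERIV_imp_deriv, rule has_real_derivative_gfun)

lemma continuous_on_dgfun: "continuous_on S (dgfun n r)"
  unfolding dgfun_def by (intro continuous_intros)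

lemma sum_binomial_dgfun:
  assumes "i \<le> N"
  shows "(\<Sum>k=1..i+1. real ((N+1) choose (k-1)) * dgfun (N+2) k u)
       = real (N+1) * real (N choose i) * u ^ (N-i) * (1-u) ^ i"
  using assms
proof (induction i)
  case 0
  then show ?case by (simp add: dgfun_def)
next
  case (Suc i)
  then obtain p where N: "N = i + 1 + p"
    by (metis add.commute le_add_diff_inverse Suc_le_eq add.assoc Suc_eq_plus1)
  have c1: "real ((N+1) choose (i+1)) * real (i+1) = real (N+1) * real (N choose i)"
    using Suc_times_binomial_eq[of N i] by (metis Suc_eq_plus1 of_nat_mult mult.commute)
  have c2: "real ((N+1) choose (i+1)) * real (p+1) = real (N+1) * real (N choose (i+1))"
  proof -
    have "(N+1 - (i+1)) * ((N+1) choose (i+1)) = (N+1) * ((N+1-1) choose (i+1))"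
      by (rule binomial_absorb_comp)
    moreover have "N+1-(i+1) = p+1" using N by simp
    ultimately show ?thesis by (metis add_diff_cancel_right' of_nat_mult mult.commute)
  qed
  have "(\<Sum>k=1..Suc i+1. real ((N+1) choose (k-1)) * dgfun (N+2) k u)
      = real (N+1) * real (N choose i) * u^(p+1) * (1-u)^i
        + real ((N+1) choose (i+1)) * (real (p+1) * u^p * (1-u)^(i+1) - real (i+1) * u^(p+1) * (1-u)^i)"
    using Suc N by (simp add: dgfun_def)
  also have "\<dots> = real ((N+1) choose (i+1)) * real (p+1) * u^p * (1-u)^(i+1)
       + (real (N+1) * real (N choose i) - real ((N+1) choose (i+1)) * real (i+1)) * u^(p+1) * (1-u)^i"
    by (simp add: algebra_simps)
  also have "\<dots> = real (N+1) * real (N choose Suc i) * u^(N - Suc i) * (1-u)^(Suc i)"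
    using c1 c2 N by simp
  finally show ?case .
qed

lemma sum_binomial_dgfun_eq_0:
  "(\<Sum>k=1..N+2. real ((N+1) choose (k-1)) * dgfun (N+2) k u) = 0"
  using sum_binomial_dgfun[of N N u] by (simp add: dgfun_def numeral_2_eq_2)

lemma sum_bernstein_basis:
  assumes "2 \<le> n"
  shows "(\<Sum>r=1..n-1. real ((n - 2) choose (r - 1)) * u ^ (n - 1 - r) * (1 - u) ^ (r - 1)) = 1"
proof -
  have "(\<Sum>r=1..n-1. real ((n - 2) choose (r - 1)) * u ^ (n - 1 - r) * (1 - u) ^ (r - 1))
      = (\<Sum>i\<le>n-2. real ((n - 2) choose i) * (1 - u) ^ i * u ^ (n - 2 - i))"
    using assms by (intro sum.reindex_bij_witness[where j="\<lambda>r. r - 1" and i="Suc"]) (auto simp: mult_ac)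
  also have "\<dots> = ((1 - u) + u) ^ (n - 2)" by (rule binomial_ring[symmetric])
  finally show ?thesis by simp
qed

text \<open>The factorisation \<open>(1 - q)^d g\<^sub>j - q^d g\<^sub>k = u^(n-k) (1-u)^(j-1) (((1-q) u)^d - (q (1-u))^d)\<close>,
  \<open>d = k - j\<close>, changes sign exactly at \<open>u = q\<close>.\<close>

lemma gfun_single_crossing:
  fixes q u :: real
  assumes jk: "1 \<le> j" "j < k" "k \<le> n" and q: "0 \<le> q" "q \<le> 1"
  shows "q \<le> u \<Longrightarrow> u \<le> 1 \<Longrightarrow> 0 \<le> (1 - q) ^ (k - j) * gfun n j u - q ^ (k - j) * gfun n k u"
    and "0 \<le> u \<Longrightarrow> u \<le> q \<Longrightarrow> (1 - q) ^ (k - j) * gfun n j u - q ^ (k - j) * gfun n k u \<le> 0"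
proof -
  define d where "d = k - j"
  have exps: "n - j = (n - k) + d" "k - 1 = (j - 1) + d" using jk by (auto simp: d_def)
  have H_eq: "(1 - q) ^ d * gfun n j u - q ^ d * gfun n k u
      = u ^ (n - k) * (1 - u) ^ (j - 1) * (((1 - q) * u) ^ d - (q * (1 - u)) ^ d)"
    unfolding gfun_def exps power_add power_mult_distrib by (simp add: algebra_simps)
  show "0 \<le> (1 - q) ^ (k - j) * gfun n j u - q ^ (k - j) * gfun n k u" if "q \<le> u" "u \<le> 1"
  proof -
    have "0 \<le> q * (1 - u)" using that q by simp
    moreover have "q * (1 - u) \<le> (1 - q) * u" using that by (simp add: algebra_simps)
    ultimately have "(q * (1 - u)) ^ d \<le> ((1 - q) * u) ^ d" by (simp add: power_mono)
    then show ?thesis using H_eq that q by (simp add: d_def)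
  qed
  show "(1 - q) ^ (k - j) * gfun n j u - q ^ (k - j) * gfun n k u \<le> 0" if "0 \<le> u" "u \<le> q"
  proof -
    have "0 \<le> (1 - q) * u" using that q by simp
    moreover have "(1 - q) * u \<le> q * (1 - u)" using that by (simp add: algebra_simps)
    ultimately have "((1 - q) * u) ^ d \<le> (q * (1 - u)) ^ d" by (simp add: power_mono)
    moreover have "0 \<le> u ^ (n - k) * (1 - u) ^ (j - 1)" using that q by simp
    ultimately show ?thesis using H_eq by (simp add: d_def mult_nonneg_nonpos)
  qed
qed

lemma integral_ge_mult_length:
  fixes f :: "real \<Rightarrow> real"
  assumes "integrable lborel f" "\<And>t. 0 \<le> f t" "0 \<le> c" "a \<le> b" "\<And>t. t \<in> {a..b} \<Longrightarrow> c \<le> f t"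
  shows "c * (b - a) \<le> (LINT t|lborel. f t)"
proof -
  have "(LINT t|lborel. c * indicator {a..b} t) \<le> (LINT t|lborel. f t)"
    using assms by (intro integral_mono) (auto split: split_indicator)
  then show ?thesis using assms by simp
qed

text \<open>A nonzero integrable density is not monotone on the whole line, so only the first
  disjunct of \<open>unimodal_on\<close> can hold.\<close>

lemma integrable_unimodal_has_mode:
  fixes f :: "real \<Rightarrow> real"
  assumes unimodal: "unimodal_on UNIV f" and int: "integrable lborel f"
    and nonneg: "\<And>t. 0 \<le> f t" and pos: "0 < (LINT t|lborel. f t)"
  shows "\<exists>m. (\<forall>x y. x \<le> y \<and> y \<le> m \<longrightarrow> f x \<le> f y) \<and> (\<forall>x y. m \<le> x \<and> x \<le> y \<longrightarrow> f y \<le> f x)"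
proof -
  obtain t0 where t0: "0 < f t0"
  proof (rule ccontr)
    assume "\<not> thesis"
    then have "f = (\<lambda>_. 0)" using nonneg that by (intro ext) (metis order.not_eq_order_implies_strict)
    with pos show False by simp
  qed
  define K where "K = 2 * (LINT t|lborel. f t) / f t0"
  have K: "0 \<le> K" "f t0 * K > (LINT t|lborel. f t)"
    using t0 pos by (auto simp: K_def)
  have "\<not> mono_on UNIV f"
  proof
    assume "mono_on UNIV f"
    then have "f t0 * (t0 + K - t0) \<le> (LINT t|lborel. f t)"
      using K t0 by (intro integral_ge_mult_length[OF int nonneg]) (auto simp: mono_on_def)
    with K show False by simp
  qed
  moreover have "\<not> antimono_on UNIV f"
  proof
    assume "antimono_on UNIV f"
    then have "f t0 * (t0 - (t0 - K)) \<le> (LINT t|lborel. f t)"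
      using K t0 by (intro integral_ge_mult_length[OF int nonneg]) (auto simp: monotone_on_def)
    with K show False by simp
  qed
  ultimately show ?thesis using unimodal unfolding unimodal_on_def by auto
qed

lemma strictly_convex_on_imp_convex_on:
  assumes "convex S" "strictly_convex_on S c"
  shows "convex_on S c"
proof (rule convex_onI[OF _ assms(1)])
  fix t x y :: real assume "0 < t" "t < 1" "x \<in> S" "y \<in> S"
  then show "c ((1 - t) *\<^sub>R x + t *\<^sub>R y) \<le> (1 - t) * c x + t * c y"
  proof (cases "x = y")
    case False
    then have "c ((1 - t) * x + t * y) < (1 - t) * c x + t * c y"
      using assms(2) \<open>0 < t\<close> \<open>t < 1\<close> \<open>x \<in> S\<close> \<open>y \<in> S\<close> unfolding strictly_convex_on_def by blast
    then show ?thesis by simp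
  qed (simp add: algebra_simps)
qed

lemma diff_divide_diff_swap: "(p - q) / (r - s) = (q - p) / (s - r)" for p q r s :: real
  by (metis minus_diff_eq minus_divide_divide)

lemma convex_on_deriv_le_slope:
  fixes c :: "real \<Rightarrow> real"
  assumes convex: "convex_on {a..b} c"
    and deriv: "(c has_real_derivative D) (at x within {a..b})"
    and "x \<in> {a..b}" "z \<in> {a..b}" "x < z"
  shows "D \<le> (c z - c x) / (z - x)"
proof (rule tendsto_upperbound)
  have "((\<lambda>w. (c w - c x) / (w - x)) \<longlongrightarrow> D) (at x within {a..b})"
    using deriv by (simp add: has_field_derivative_iff)
  then have "((\<lambda>w. (c w - c x) / (w - x)) \<longlongrightarrow> D) (at x within {x..z})"
    by (rule tendsto_within_subset) (use assms in auto)
  then show "((\<lambda>w. (c w - c x) / (w - x)) \<longlongrightarrow> D) (at_right x)"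
    using \<open>x < z\<close> by (simp add: at_within_Icc_at_right)
  have "(c w - c x) / (w - x) \<le> (c z - c x) / (z - x)" if "x < w" "w < z" for w
    using convex_on_slope_le(1)[OF convex \<open>x \<in> {a..b}\<close> \<open>z \<in> {a..b}\<close> that] by (simp only: diff_divide_diff_swap)
  then show "\<forall>\<^sub>F w in at_right x. (c w - c x) / (w - x) \<le> (c z - c x) / (z - x)"
    unfolding eventually_at_right[OF \<open>x < z\<close>] using \<open>x < z\<close> by blast
qed simp

lemma convex_on_slope_le_deriv:
  fixes c :: "real \<Rightarrow> real"
  assumes convex: "convex_on {a..b} c"
    and deriv: "(c has_real_derivative D) (at y within {a..b})"
    and "z \<in> {a..b}" "y \<in> {a..b}" "z < y"
  shows "(c y - c z) / (y - z) \<le> D"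
proof (rule tendsto_lowerbound)
  have "((\<lambda>w. (c w - c y) / (w - y)) \<longlongrightarrow> D) (at y within {a..b})"
    using deriv by (simp add: has_field_derivative_iff)
  then have "((\<lambda>w. (c w - c y) / (w - y)) \<longlongrightarrow> D) (at y within {z..y})"
    by (rule tendsto_within_subset) (use assms in auto)
  then show "((\<lambda>w. (c w - c y) / (w - y)) \<longlongrightarrow> D) (at_left y)"
    using \<open>z < y\<close> by (simp add: at_within_Icc_at_left)
  have "(c y - c z) / (y - z) \<le> (c w - c y) / (w - y)" if "z < w" "w < y" for w
    using convex_on_slope_le(2)[OF convex \<open>z \<in> {a..b}\<close> \<open>y \<in> {a..b}\<close> that] by (simp only: diff_divide_diff_swap)
  then show "\<forall>\<^sub>F w in at_left y. (c y - c z) / (y - z) \<le> (c w - c y) / (w - y)"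
    unfolding eventually_at_left[OF \<open>z < y\<close>] using \<open>z < y\<close> by blast
qed simp

text \<open>Strict convexity separates the chord slopes over the two halves of \<open>[x, y]\<close>, which bound
  \<open>c' x\<close> from above and \<open>c' y\<close> from below.\<close>

lemma strictly_convex_on_deriv_strict_mono:
  fixes c c' :: "real \<Rightarrow> real"
  assumes deriv: "\<And>x. x \<in> {a..b} \<Longrightarrow> (c has_real_derivative c' x) (at x within {a..b})"
    and strict: "strictly_convex_on {a..b} c"
  shows "strict_mono_on {a..b} c'"
proof (rule strict_mono_onI)
  fix x y assume x: "x \<in> {a..b}" and y: "y \<in> {a..b}" and "x < y"
  have convex: "convex_on {a..b} c"
    using strict by (intro strictly_convex_on_imp_convex_on) auto
  define z where "z = (x + y) / 2"
  have z: "z \<in> {a..b}" "x < z" "z < y" using x y \<open>x < y\<close> by (auto simp: z_def)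
  have "\<forall>t. x \<noteq> y \<and> 0 < t \<and> t < 1 \<longrightarrow> c ((1 - t) * x + t * y) < (1 - t) * c x + t * c y"
    using strict x y unfolding strictly_convex_on_def by blast
  then have "x \<noteq> y \<and> 0 < (1/2::real) \<and> (1/2::real) < 1
      \<longrightarrow> c ((1 - 1/2) * x + (1/2) * y) < (1 - 1/2) * c x + (1/2) * c y"
    by (rule spec)
  then have "c z - c x < c y - c z"
    using \<open>x < y\<close> by (auto simp: z_def field_simps)
  moreover have "y - z = z - x" "0 < z - x" using z by (auto simp: z_def field_simps)
  ultimately have "(c z - c x) / (z - x) < (c y - c z) / (y - z)"
    by (simp add: divide_strict_right_mono)
  then show "c' x < c' y"
    using convex_on_deriv_le_slope[OF convex deriv[OF x] x z(1,2)]
      convex_on_slope_le_deriv[OF convex deriv[OF y] z(1) y z(3)] by linarith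
qed

lemma strict_mono_on_if_comp_strict_mono:
  fixes g :: "'a::linorder \<Rightarrow> 'b::linorder"
  assumes "strict_mono_on X g" "\<And>t. t \<in> T \<Longrightarrow> x t \<in> X \<and> g (x t) = M t"
    and "strict_mono_on T M"
  shows "strict_mono_on T x"
proof (rule strict_mono_onI)
  fix s t assume "s \<in> T" "t \<in> T" "s < t"
  then have "g (x s) < g (x t)" using assms(2,3) by (simp add: strict_mono_onD)
  moreover have "x s \<in> X" "x t \<in> X" using assms(2) \<open>s \<in> T\<close> \<open>t \<in> T\<close> by auto
  ultimately show "x s < x t" using strict_mono_on_less[OF assms(1)] by simp
qed

lemma antimono_on_if_comp_antimono:
  fixes g :: "'a::linorder \<Rightarrow> 'b::linorder"
  assumes "strict_mono_on X g" "\<And>t. t \<in> T \<Longrightarrow> x t \<in> X \<and> g (x t) = M t"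
    and "antimono_on T M"
  shows "antimono_on T x"
proof (rule monotone_onI)
  fix s t assume "s \<in> T" "t \<in> T" "s \<le> t"
  then have "M t \<le> M s" using monotone_onD[OF assms(3)] by simp
  then have "g (x t) \<le> g (x s)" using assms(2) \<open>s \<in> T\<close> \<open>t \<in> T\<close> by simp
  moreover have "x s \<in> X" "x t \<in> X" using assms(2) \<open>s \<in> T\<close> \<open>t \<in> T\<close> by auto
  ultimately show "x t \<le> x s" using strict_mono_on_less_eq[OF assms(1)] by simp
qed

definition uniform01 :: "real measure" where
  "uniform01 = density lborel (\<lambda>u. ennreal (indicator {0..1} u))"

lemma integral_uniform01:
  fixes h :: "real \<Rightarrow> real"
  assumes "h \<in> borel_measurable borel"
  shows "(LINT u|uniform01. h u) = (LINT u|lborel. indicator {0..1} u * h u)"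
  unfolding uniform01_def by (rule integral_real_density) (use assms in auto)

lemma real_distribution_uniform01: "real_distribution uniform01"
proof -
  have "emeasure uniform01 UNIV = 1"
    unfolding uniform01_def by (subst emeasure_density) (auto simp: ennreal_indicator)
  then interpret prob_space uniform01
    by (intro prob_spaceI) (simp add: uniform01_def)
  show ?thesis by unfold_locales (simp add: uniform01_def)
qed

lemma cdf_uniform01: "cdf uniform01 y = max 0 (min 1 y)"
proof -
  interpret U: real_distribution uniform01 by (rule real_distribution_uniform01)
  have "cdf uniform01 y = (LINT t|uniform01. indicator {..y} t)"
    by (simp add: cdf_def2 U.emeasure_eq_measure)
  also have "\<dots> = (LINT t|lborel. indicator {0..1} t * indicator {..y} t)"
    by (rule integral_uniform01) auto
  also have "\<dots> = (LINT t|lborel. indicator {0..min 1 y} t)"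
    by (intro Bochner_Integration.integral_cong) (auto split: split_indicator)
  finally show ?thesis by simp
qed

locale unimodal_density =
  fixes f F :: "real \<Rightarrow> real" and m :: real
  assumes f_borel: "f \<in> borel_measurable lborel"
    and f_nonneg: "\<And>t. 0 \<le> f t"
    and f_integrable: "integrable lborel f"
    and f_total: "(LINT t|lborel. f t) = 1"
    and F_cdf: "\<And>x. F x = (LINT t:{..x}|lborel. f t)"
    and mono_before_mode: "\<And>x y. x \<le> y \<Longrightarrow> y \<le> m \<Longrightarrow> f x \<le> f y"
    and antimono_after_mode: "\<And>x y. m \<le> x \<Longrightarrow> x \<le> y \<Longrightarrow> f y \<le> f x"
begin

lemma f_measurable[measurable]: "f \<in> borel_measurable borel"
  using f_borel by simp

lemma f_le_mode: "f t \<le> f m"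
  by (cases "t \<le> m") (auto intro: mono_before_mode antimono_after_mode)

definition P :: "real measure" where
  "P = density lborel (\<lambda>t. ennreal (f t))"

lemma sets_P[simp, measurable_cong]: "sets P = sets borel"
  and space_P[simp]: "space P = UNIV"
  by (simp_all add: P_def)

lemma integral_P: "g \<in> borel_measurable borel \<Longrightarrow> (LINT t|P. g t) = (LINT t|lborel. f t * g t)"
  unfolding P_def using f_nonneg by (subst integral_real_density) auto

lemma real_distribution_P: "real_distribution P"
proof -
  have "emeasure P UNIV = ennreal (LINT t|lborel. f t)"
    unfolding P_def using f_integrable f_nonneg
    by (subst emeasure_density) (auto intro!: nn_integral_eq_integral)
  then interpret prob_space P by (intro prob_spaceI) (simp add: f_total)
  show ?thesis by unfold_locales simp
qed

interpretation P: real_distribution P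
  by (rule real_distribution_P)

lemma cdf_P: "cdf P = F"
proof
  fix x
  have "cdf P x = (LINT t|P. indicator {..x} t)"
    by (simp add: cdf_def2 P.emeasure_eq_measure)
  also have "\<dots> = F x"
    by (subst integral_P) (auto simp: F_cdf set_lebesgue_integral_def mult.commute)
  finally show "cdf P x = F x" .
qed

lemma F_mono: "x \<le> y \<Longrightarrow> F x \<le> F y"
  and F_nonneg: "0 \<le> F x"
  and F_le_1: "F x \<le> 1"
  and F_at_top: "(F \<longlongrightarrow> 1) at_top"
  and F_at_bot: "(F \<longlongrightarrow> 0) at_bot"
  using P.cdf_nondecreasing P.cdf_nonneg P.cdf_bounded_prob P.cdf_lim_at_top_prob P.cdf_lim_at_bot
  by (simp_all add: cdf_P)

lemma continuous_on_F: "continuous_on S F"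
proof -
  have "measure P {x} = 0" for x
  proof -
    have "AE t in lborel. f t * indicator {x} t = 0"
      using AE_lborel_singleton[of x] by eventually_elim (auto split: split_indicator)
    then have "(LINT t|lborel. f t * indicator {x} t) = 0"
      by (simp add: integral_eq_zero_AE)
    then show ?thesis
      by (subst (asm) integral_P[symmetric]) (auto simp: P.emeasure_eq_measure)
  qed
  then show ?thesis
    using P.isCont_cdf by (auto simp: cdf_P intro!: continuous_at_imp_continuous_on)
qed

lemma F_measurable[measurable]: "F \<in> borel_measurable borel"
  by (rule borel_measurable_continuous_onI[OF continuous_on_F])

lemma cdf_sublevel_set:
  assumes nonempty: "{t. F t \<le> y} \<noteq> {}" and "y < 1"
  obtains \<sigma> where "{t. F t \<le> y} = {..\<sigma>}" "F \<sigma> = y"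
proof -
  let ?S = "{t. F t \<le> y}"
  have "\<forall>\<^sub>F t in at_top. y < F t"
    using order_tendstoD(1)[OF F_at_top] \<open>y < 1\<close> by simp
  then obtain T where T: "\<And>t. T \<le> t \<Longrightarrow> y < F t"
    by (auto simp: eventually_at_top_linorder)
  have bdd: "bdd_above ?S"
  proof
    fix t assume "t \<in> ?S"
    then show "t \<le> T" using T[of t] by fastforce
  qed
  have closed: "closed ?S"
    by (rule closed_Collect_le) (auto intro: continuous_on_F)
  define \<sigma> where "\<sigma> = Sup ?S"
  have \<sigma>: "F \<sigma> \<le> y"
    using closed_contains_Sup[OF nonempty bdd closed] by (simp add: \<sigma>_def)
  have S_eq: "?S = {..\<sigma>}"
  proof
    show "?S \<subseteq> {..\<sigma>}" using bdd by (auto simp: \<sigma>_def intro: cSup_upper)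
    show "{..\<sigma>} \<subseteq> ?S" using \<sigma> F_mono by (force intro: order.trans)
  qed
  have "y \<le> F \<sigma>"
  proof (rule tendsto_lowerbound)
    show "(F \<longlongrightarrow> F \<sigma>) (at_right \<sigma>)"
      using continuous_on_F[of UNIV] by (simp add: continuous_on_def filterlim_at_split)
    have "y \<le> F t" if "\<sigma> < t" for t
    proof -
      have "t \<notin> ?S" using S_eq that by simp
      then show ?thesis by simp
    qed
    then show "\<forall>\<^sub>F t in at_right \<sigma>. y \<le> F t"
      using eventually_at_right_less[of \<sigma>] by (auto elim: eventually_mono)
  qed simp
  with \<sigma> S_eq show ?thesis using that by simp
qed

lemma measure_cdf_le: "measure P {t. F t \<le> y} = max 0 (min 1 y)"
proof (cases "{t. F t \<le> y} = {}")
  case True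
  have "y \<le> 0"
  proof (rule ccontr)
    assume "\<not> y \<le> 0"
    then have "\<forall>\<^sub>F t in at_bot. F t < y"
      using order_tendstoD(2)[OF F_at_bot] by simp
    then obtain t where "F t < y"
      by (auto simp: eventually_at_bot_linorder)
    with True show False by (auto dest: less_imp_le)
  qed
  then have "max 0 (min 1 y) = 0" by simp
  with True show ?thesis by (simp only: measure_empty)
next
  case nonempty: False
  show ?thesis
  proof (cases "1 \<le> y")
    case True
    then have "{t. F t \<le> y} = UNIV" using F_le_1 by (auto intro: order.trans)
    with True show ?thesis using P.prob_space by simp
  next
    case False
    then obtain \<sigma> where "{t. F t \<le> y} = {..\<sigma>}" "F \<sigma> = y"
      using cdf_sublevel_set[OF nonempty] by auto
    moreover have "measure P {..\<sigma>} = F \<sigma>"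
      by (simp add: cdf_def2 flip: cdf_P)
    ultimately show ?thesis using False F_nonneg[of \<sigma>] by simp
  qed
qed

lemma distr_P_F: "distr P borel F = uniform01"
proof (rule cdf_unique)
  show "real_distribution (distr P borel F)"
    by (rule P.real_distribution_distr) simp
  show "cdf (distr P borel F) = cdf uniform01"
  proof
    fix y
    have "cdf (distr P borel F) y = measure P {t. F t \<le> y}"
      unfolding cdf_def2 by (subst measure_distr) (auto simp: vimage_def)
    then show "cdf (distr P borel F) y = cdf uniform01 y"
      by (simp add: measure_cdf_le cdf_uniform01)
  qed
qed (rule real_distribution_uniform01)

lemma integral_comp_F:
  "h \<in> borel_measurable borel \<Longrightarrow>
     (LINT t|lborel. f t * h (F t)) = (LINT u|lborel. indicator {0..1} u * h u)"
  by (simp flip: integral_P integral_uniform01 distr_P_F add: integral_distr)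

lemma integrable_mult_density:
  assumes q[measurable]: "q \<in> borel_measurable borel" and bound: "\<And>t. \<bar>q t\<bar> \<le> K"
  shows "integrable lborel (\<lambda>t. f t * q t)"
proof (rule Bochner_Integration.integrable_bound)
  show "integrable lborel (\<lambda>t. K * f t)" using f_integrable by simp
  show "AE t in lborel. norm (f t * q t) \<le> norm (K * f t)"
  proof (rule AE_I2)
    fix t
    have "\<bar>f t * q t\<bar> \<le> f t * K"
      using bound[of t] f_nonneg[of t] by (simp add: abs_mult mult_left_mono)
    then show "norm (f t * q t) \<le> norm (K * f t)" by (simp add: mult.commute)
  qed
qed simp

lemma integrable_mult_density_sq:
  assumes [measurable]: "q \<in> borel_measurable borel" and bound: "\<And>t. \<bar>q t\<bar> \<le> K"
  shows "integrable lborel (\<lambda>t. q t * (f t)\<^sup>2)"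
proof -
  have "\<bar>f t * q t\<bar> \<le> f m * K" for t
    using bound[of t] f_nonneg[of t] f_le_mode[of t] by (simp add: abs_mult mult_mono)
  then have "integrable lborel (\<lambda>t. f t * (f t * q t))"
    by (intro integrable_mult_density) auto
  then show ?thesis by (simp add: power2_eq_square mult_ac)
qed

lemma bounded_comp_F:
  fixes g :: "real \<Rightarrow> real"
  assumes "continuous_on {0..1} g"
  obtains K where "\<And>t. \<bar>g (F t)\<bar> \<le> K"
proof -
  have "bounded (g ` {0..1})"
    using assms by (intro compact_imp_bounded compact_continuous_image) auto
  then obtain K where "\<forall>u\<in>{0..1}. \<bar>g u\<bar> \<le> K"
    unfolding bounded_iff by auto
  then show ?thesis using that F_nonneg F_le_1 by (metis atLeastAtMost_iff)
qed

lemma integrable_comp_F_mult_density_sq: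
  fixes g :: "real \<Rightarrow> real"
  assumes "continuous_on UNIV g"
  shows "integrable lborel (\<lambda>t. g (F t) * (f t)\<^sup>2)"
proof -
  obtain K where "\<And>t. \<bar>g (F t)\<bar> \<le> K"
    using bounded_comp_F assms by (metis continuous_on_subset subset_UNIV)
  moreover have "g \<in> borel_measurable borel"
    using assms by (rule borel_measurable_continuous_onI)
  ultimately show ?thesis by (intro integrable_mult_density_sq) auto
qed

lemma integral_density_Icc: "a \<le> b \<Longrightarrow> (LINT t|lborel. f t * indicator {a..b} t) = F b - F a"
proof -
  assume "a \<le> b"
  have "AE t in lborel. f t * indicator {a..b} t = f t * indicator {..b} t - f t * indicator {..a} t"
    using AE_lborel_singleton[of a] by eventually_elim (use \<open>a \<le> b\<close> in \<open>auto split: split_indicator\<close>)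
  then have "(LINT t|lborel. f t * indicator {a..b} t)
      = (LINT t|lborel. f t * indicator {..b} t) - (LINT t|lborel. f t * indicator {..a} t)"
    by (subst integral_cong_AE[where g="\<lambda>t. f t * indicator {..b} t - f t * indicator {..a} t"])
       (auto intro!: Bochner_Integration.integral_diff integrable_real_mult_indicator f_integrable)
  then show ?thesis by (simp add: F_cdf set_lebesgue_integral_def mult.commute)
qed

text \<open>Up to a null set, \<open>{a..b}\<close> is the preimage of \<open>{F a..F b}\<close> under \<open>F\<close>; then substitute
  \<open>u = F t\<close>.\<close>

lemma integral_density_Icc_comp_F:
  assumes deriv: "\<And>u. (H has_real_derivative H' u) (at u)" and cont: "continuous_on UNIV H'"
    and "a \<le> b"
  shows "(LINT t|lborel. f t * (indicator {a..b} t * H' (F t))) = H (F b) - H (F a)"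
proof -
  have [measurable]: "H' \<in> borel_measurable borel" using cont by (rule borel_measurable_continuous_onI)
  have Fab: "F a \<le> F b" using F_mono \<open>a \<le> b\<close> by simp
  define d where "d t = f t * (indicator {F a..F b} (F t) - indicator {a..b} t)" for t
  have "0 \<le> d t" for t
    using F_mono f_nonneg[of t] by (auto simp: d_def split: split_indicator)
  moreover have "integrable lborel d"
    unfolding d_def by (rule integrable_mult_density[where K=1]) (auto split: split_indicator)
  moreover have "(LINT t|lborel. d t) = 0"
  proof -
    have "(LINT t|lborel. f t * indicator {F a..F b} (F t)) = F b - F a"
      using integral_comp_F[of "indicator {F a..F b}"] F_nonneg[of a] F_le_1[of b] Fab
      by (simp add: indicator_inter_arith[symmetric] Int_absorb1 flip: indicator_inter_arith)
    then show ?thesis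
      unfolding d_def right_diff_distrib using integral_density_Icc[OF \<open>a \<le> b\<close>]
      by (subst Bochner_Integration.integral_diff)
        (auto intro!: integrable_mult_density[where K=1] integrable_real_mult_indicator f_integrable
          split: split_indicator)
  qed
  ultimately have "AE t in lborel. d t = 0"
    by (simp add: integral_nonneg_eq_0_iff_AE)
  then have "(LINT t|lborel. f t * (indicator {a..b} t * H' (F t)))
      = (LINT t|lborel. f t * (indicator {F a..F b} (F t) * H' (F t)))"
    by (intro integral_cong_AE) (auto simp: d_def algebra_simps elim!: eventually_mono)
  also have "\<dots> = (LINT u|lborel. indicator {F a..F b} u *\<^sub>R H' u)"
    using F_nonneg[of a] F_le_1[of b]
    by (subst integral_comp_F) (auto intro!: Bochner_Integration.integral_cong split: split_indicator)
  also have "\<dots> = H (F b) - H (F a)"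
  proof (rule integral_FTC_atLeastAtMost[OF Fab])
    show "(H has_vector_derivative H' x) (at x within {F a..F b})" for x
      using deriv[of x] by (simp add: has_real_derivative_iff_has_vector_derivative[symmetric]
          has_field_derivative_at_within)
    show "continuous_on {F a..F b} H'" using cont by (rule continuous_on_subset) auto
  qed
  finally show ?thesis .
qed

lemma min_le_f_between:
  assumes "x \<le> t" "t \<le> y"
  shows "min (f x) (f y) \<le> f t"
proof (cases "t \<le> m")
  case True
  then have "f x \<le> f t" using assms by (intro mono_before_mode)
  then show ?thesis by simp
next
  case False
  then have "f y \<le> f t" using assms by (intro antimono_after_mode) auto
  then show ?thesis by simp
qed

text \<open>The superlevel set is bounded because \<open>f\<close> has total mass 1.\<close>

lemma superlevel_set_interval:
  assumes "0 < s"
  obtains a b where "a \<le> m" "m \<le> b" "\<And>t. t \<noteq> a \<Longrightarrow> t \<noteq> b \<Longrightarrow> s < f t \<longleftrightarrow> a \<le> t \<and> t \<le> b"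
proof (cases "s < f m")
  case False
  then show ?thesis using f_le_mode by (intro that[of m m]) (auto intro: less_le_trans)
next
  case True
  define I where "I = {t. s < f t}"
  have mI: "m \<in> I" using True by (simp add: I_def)
  have between: "t \<in> I" if "x \<in> I" "y \<in> I" "x \<le> t" "t \<le> y" for x y t
    using min_le_f_between[OF that(3,4)] that(1,2) by (auto simp: I_def)
  have width: "s * (y - x) \<le> 1" if "x \<in> I" "y \<in> I" "x \<le> y" for x y
    using integral_ge_mult_length[OF f_integrable f_nonneg, of s x y] between[OF that(1,2)] that assms
    by (force simp: I_def f_total)
  have near_mode: "\<bar>t - m\<bar> \<le> 1 / s" if "t \<in> I" for t
  proof -
    have "s * \<bar>t - m\<bar> \<le> 1"
      using width[OF mI that] width[OF that mI] by (cases "m \<le> t") auto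
    then show ?thesis using assms by (simp add: pos_le_divide_eq mult.commute)
  qed
  have bdd_above: "bdd_above I" and bdd_below: "bdd_below I"
    by (auto intro!: bdd_aboveI[of _ "m + 1 / s"] bdd_belowI[of _ "m - 1 / s"]
        simp: abs_le_iff dest!: near_mode)
  show ?thesis
  proof (rule that[of "Inf I" "Sup I"])
    show "Inf I \<le> m" "m \<le> Sup I"
      using mI bdd_above bdd_below by (auto intro: cInf_lower cSup_upper)
    fix t assume t: "t \<noteq> Inf I" "t \<noteq> Sup I"
    show "s < f t \<longleftrightarrow> Inf I \<le> t \<and> t \<le> Sup I"
    proof
      assume "s < f t"
      then show "Inf I \<le> t \<and> t \<le> Sup I"
        using bdd_above bdd_below by (auto simp: I_def intro: cInf_lower cSup_upper)
    next
      assume "Inf I \<le> t \<and> t \<le> Sup I"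
      then have "Inf I < t" "t < Sup I" using t by auto
      moreover have "I \<noteq> {}" using mI by auto
      ultimately obtain x y where "x \<in> I" "x < t" "y \<in> I" "t < y"
        using bdd_above bdd_below by (auto simp: cInf_less_iff less_cSup_iff)
      then show "s < f t" using between[of x y t] by (simp add: I_def)
    qed
  qed
qed

lemma integral_mult_density_sq_layers:
  assumes [measurable]: "g \<in> borel_measurable borel" and bound: "\<And>t. \<bar>g t\<bar> \<le> K"
  shows "(LINT t|lborel. g t * (f t)\<^sup>2)
       = (LINT s|lborel. LINT t|lborel. indicator {0<..<f t} s * (f t * g t))"
proof -
  define \<phi> where "\<phi> t s = indicator {0<..<f t} s * (f t * g t)" for t s :: real
  have [measurable]: "(\<lambda>(t, s). \<phi> t s) \<in> borel_measurable (lborel \<Otimes>\<^sub>M lborel)"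
  proof -
    have "(\<lambda>(t, s). \<phi> t s) = (\<lambda>x. if 0 < snd x \<and> snd x < f (fst x) then f (fst x) * g (fst x) else 0)"
      by (auto simp: \<phi>_def fun_eq_iff split: split_indicator)
    also have "\<dots> \<in> borel_measurable (lborel \<Otimes>\<^sub>M lborel)" by measurable
    finally show ?thesis .
  qed
  have inner: "(LINT s|lborel. \<phi> t s) = g t * (f t)\<^sup>2"
    and inner_norm: "(LINT s|lborel. norm (\<phi> t s)) = \<bar>g t\<bar> * (f t)\<^sup>2" for t
    using f_nonneg[of t] by (simp_all add: \<phi>_def power2_eq_square abs_mult)
  have "integrable (lborel \<Otimes>\<^sub>M lborel) (\<lambda>(t, s). \<phi> t s)"
  proof (rule lborel_pair.Fubini_integrable)
    show "integrable lborel (\<lambda>t. LINT s|lborel. norm (case (t, s) of (t, s) \<Rightarrow> \<phi> t s))"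
      unfolding case_prod_conv inner_norm using bound
      by (intro integrable_mult_density_sq[of _ K]) auto
    show "AE t in lborel. integrable lborel (\<lambda>s. case (t, s) of (t, s) \<Rightarrow> \<phi> t s)"
      using f_nonneg by (intro AE_I2) (simp add: \<phi>_def integrable_indicator_iff emeasure_lborel_Ioo)
  qed measurable
  then have "(LINT t|lborel. LINT s|lborel. \<phi> t s) = (LINT s|lborel. LINT t|lborel. \<phi> t s)"
    by (rule lborel_pair.Fubini_integral[symmetric])
  moreover have "(LINT t|lborel. g t * (f t)\<^sup>2) = (LINT t|lborel. LINT s|lborel. \<phi> t s)"
    by (simp only: inner)
  ultimately show ?thesis by (simp only: \<phi>_def)
qed

text \<open>Layer-cake: write \<open>f\<^sup>2\<close> as an integral of \<open>f\<close> over the superlevel sets of \<open>f\<close>. On each of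
  them, an interval \<open>[a, b]\<close> around the mode, the integral is \<open>H (F b) - H (F a) \<ge> 0\<close>.\<close>

lemma integral_deriv_comp_F_mult_density_sq_nonneg:
  assumes deriv: "\<And>u. (H has_real_derivative H' u) (at u)" and cont: "continuous_on UNIV H'"
    and H_nonneg: "\<And>u. F m \<le> u \<Longrightarrow> u \<le> 1 \<Longrightarrow> 0 \<le> H u"
    and H_nonpos: "\<And>u. 0 \<le> u \<Longrightarrow> u \<le> F m \<Longrightarrow> H u \<le> 0"
  shows "0 \<le> (LINT t|lborel. H' (F t) * (f t)\<^sup>2)"
proof -
  have [measurable]: "H' \<in> borel_measurable borel" using cont by (rule borel_measurable_continuous_onI)
  obtain K where K: "\<And>t. \<bar>H' (F t)\<bar> \<le> K"
    using bounded_comp_F cont by (metis continuous_on_subset subset_UNIV)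
  have "0 \<le> (LINT t|lborel. indicator {0<..<f t} s * (f t * H' (F t)))" for s
  proof (cases "0 < s")
    case False
    then show ?thesis by simp
  next
    case True
    then obtain a b where ab: "a \<le> m" "m \<le> b"
      and level: "\<And>t. t \<noteq> a \<Longrightarrow> t \<noteq> b \<Longrightarrow> s < f t \<longleftrightarrow> a \<le> t \<and> t \<le> b"
      using superlevel_set_interval by blast
    have "AE t in lborel. t \<noteq> a" "AE t in lborel. t \<noteq> b"
      by (rule AE_lborel_singleton)+
    have "(\<lambda>t. indicator {0<..<f t} s * (f t * H' (F t)))
        = (\<lambda>t. if 0 < s \<and> s < f t then f t * H' (F t) else 0)"
      by (auto split: split_indicator)
    then have [measurable]: "(\<lambda>t. indicator {0<..<f t} s * (f t * H' (F t))) \<in> borel_measurable borel"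
      by simp
    have "AE t in lborel. indicator {0<..<f t} s * (f t * H' (F t))
                             = f t * (indicator {a..b} t * H' (F t))"
      using \<open>AE t in lborel. t \<noteq> a\<close> \<open>AE t in lborel. t \<noteq> b\<close>
      by eventually_elim (use level \<open>0 < s\<close> in \<open>auto split: split_indicator\<close>)
    then have "(LINT t|lborel. indicator {0<..<f t} s * (f t * H' (F t))) = H (F b) - H (F a)"
      using integral_density_Icc_comp_F[OF deriv cont, of a b] ab
      by (subst integral_cong_AE) (auto split: split_indicator)
    moreover have "0 \<le> H (F b)" "H (F a) \<le> 0"
      using ab H_nonneg H_nonpos F_mono F_nonneg F_le_1 by auto
    ultimately show ?thesis by simp
  qed
  then show ?thesis
    using integral_mult_density_sq_layers[of "\<lambda>t. H' (F t)" K] K by simp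
qed

lemma integral_density_sq_pos: "0 < (LINT t|lborel. (f t)\<^sup>2)"
proof -
  have int: "integrable lborel (\<lambda>t. (f t)\<^sup>2)"
    using integrable_comp_F_mult_density_sq[of "\<lambda>_. 1"] by simp
  have "(LINT t|lborel. (f t)\<^sup>2) \<noteq> 0"
  proof
    assume "(LINT t|lborel. (f t)\<^sup>2) = 0"
    then have "AE t in lborel. f t = 0"
      using integral_nonneg_eq_0_iff_AE[OF int] by simp
    then have "(LINT t|lborel. f t) = 0" by (rule integral_eq_zero_AE)
    with f_total show False by simp
  qed
  moreover have "0 \<le> (LINT t|lborel. (f t)\<^sup>2)" by simp
  ultimately show ?thesis by linarith
qed

lemma beta_eq_integral:
  "beta n F f r = real ((n - 1) choose (r - 1)) * (LINT t|lborel. dgfun n r (F t) * (f t)\<^sup>2)"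
  by (simp add: beta_def deriv_gfun)

lemma integrable_dgfun_comp_F: "integrable lborel (\<lambda>t. dgfun n r (F t) * (f t)\<^sup>2)"
  by (rule integrable_comp_F_mult_density_sq[OF continuous_on_dgfun])

lemma Bsum_eq_integral:
  "Bsum n F f r
     = (LINT t|lborel. (\<Sum>k=1..r. real ((n - 1) choose (k - 1)) * dgfun n k (F t)) * (f t)\<^sup>2)"
proof -
  have "(LINT t|lborel. (\<Sum>k=1..r. real ((n - 1) choose (k - 1)) * dgfun n k (F t)) * (f t)\<^sup>2)
      = (LINT t|lborel. (\<Sum>k=1..r. real ((n - 1) choose (k - 1)) * (dgfun n k (F t) * (f t)\<^sup>2)))"
    by (simp add: sum_distrib_right mult.assoc)
  also have "\<dots> = Bsum n F f r"
    by (subst Bochner_Integration.integral_sum)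
      (simp_all add: integrable_dgfun_comp_F Bsum_def beta_eq_integral)
  finally show ?thesis ..
qed

lemma Bsum_eq_integral_bernstein:
  assumes "1 \<le> r" "r < n"
  shows "Bsum n F f r = (LINT t|lborel. real (n - 1) * real ((n - 2) choose (r - 1))
                            * F t ^ (n - 1 - r) * (1 - F t) ^ (r - 1) * (f t)\<^sup>2)"
proof -
  define N where "N = n - 2"
  have n: "n = N + 2" using assms by (simp add: N_def)
  have "(\<Sum>k=1..r. real ((n - 1) choose (k - 1)) * dgfun n k u)
      = real (n - 1) * real ((n - 2) choose (r - 1)) * u ^ (n - 1 - r) * (1 - u) ^ (r - 1)" for u
    using sum_binomial_dgfun[of "r - 1" N u] assms by (simp add: n Suc_diff_le)
  then show ?thesis by (simp add: Bsum_eq_integral)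
qed

lemma Bsum_last: "Bsum n F f n = 0"
proof -
  consider "n = 0" | "n = 1" | "2 \<le> n" by linarith
  then show ?thesis
  proof cases
    case 3
    then obtain N where "n = N + 2" by (metis le_add_diff_inverse2)
    then have "(\<Sum>k=1..n. real ((n - 1) choose (k - 1)) * dgfun n k u) = 0" for u
      using sum_binomial_dgfun_eq_0[of N u] by (simp only: add_diff_cancel_right' add_2_eq_Suc' diff_Suc_1 Suc_eq_plus1)
    then show ?thesis by (simp add: Bsum_eq_integral)
  qed (simp_all add: Bsum_def beta_def deriv_gfun dgfun_def)
qed

lemma Bsum_nonneg:
  assumes "1 \<le> r" "r \<le> n"
  shows "0 \<le> Bsum n F f r"
proof (cases "r = n")
  case False
  then have "r < n" using assms by simp
  have "0 \<le> real (n - 1) * real ((n - 2) choose (r - 1)) * F t ^ (n - 1 - r) * (1 - F t) ^ (r - 1) * (f t)\<^sup>2"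
    for t using F_nonneg[of t] F_le_1[of t] by simp
  then show ?thesis
    unfolding Bsum_eq_integral_bernstein[OF \<open>1 \<le> r\<close> \<open>r < n\<close>] by (rule Bochner_Integration.integral_nonneg)
qed (simp add: Bsum_last)

lemma sum_Bsum:
  assumes "2 \<le> n"
  shows "(\<Sum>r=1..n-1. Bsum n F f r) = real (n - 1) * (LINT t|lborel. (f t)\<^sup>2)"
proof -
  have "(\<Sum>r=1..n-1. Bsum n F f r)
      = (\<Sum>r=1..n-1. LINT t|lborel. real (n - 1) * real ((n - 2) choose (r - 1))
                          * F t ^ (n - 1 - r) * (1 - F t) ^ (r - 1) * (f t)\<^sup>2)"
    using assms by (intro sum.cong refl Bsum_eq_integral_bernstein) auto
  also have "\<dots> = (LINT t|lborel. (\<Sum>r=1..n-1. real (n - 1) * real ((n - 2) choose (r - 1))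
                          * F t ^ (n - 1 - r) * (1 - F t) ^ (r - 1) * (f t)\<^sup>2))"
    by (rule Bochner_Integration.integral_sum[symmetric])
      (auto intro!: integrable_comp_F_mult_density_sq[where g="\<lambda>u. _ * u ^ _ * (1 - u) ^ _"]
        continuous_intros)
  also have "\<dots> = (LINT t|lborel. real (n - 1) * (\<Sum>r=1..n-1. real ((n - 2) choose (r - 1))
                          * F t ^ (n - 1 - r) * (1 - F t) ^ (r - 1)) * (f t)\<^sup>2)"
    by (simp add: sum_distrib_left sum_distrib_right mult_ac)
  finally show ?thesis using sum_bernstein_basis[OF assms] by simp
qed

lemma Bsum_pos_exists:
  assumes "2 \<le> n"
  shows "\<exists>r\<in>{1..n-1}. 0 < Bsum n F f r"
proof (rule ccontr)
  assume "\<not> ?thesis"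
  then have "(\<Sum>r=1..n-1. Bsum n F f r) \<le> 0" by (intro sum_nonpos) (meson not_less)
  moreover have "0 < real (n - 1) * (LINT t|lborel. (f t)\<^sup>2)"
    using assms integral_density_sq_pos by simp
  ultimately show False using sum_Bsum[OF assms] by linarith
qed

text \<open>Single crossing: \<open>(1 - q)^d \<beta>\<^sub>j \<ge> q^d \<beta>\<^sub>k\<close> up to binomial factors, with \<open>q = F m\<close>.\<close>

lemma beta_nonneg_below_pos:
  assumes jk: "1 \<le> j" "j < k" "k \<le> n" and pos: "0 < beta n F f k"
  shows "0 \<le> beta n F f j"
proof -
  define q where "q = F m"
  define d where "d = k - j"
  have q: "0 \<le> q" "q \<le> 1" using F_nonneg F_le_1 by (auto simp: q_def)
  define H' where "H' u = (1 - q) ^ d * dgfun n j u - q ^ d * dgfun n k u" for u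
  define J where "J r = (LINT t|lborel. dgfun n r (F t) * (f t)\<^sup>2)" for r
  have "0 \<le> (LINT t|lborel. H' (F t) * (f t)\<^sup>2)"
  proof (rule integral_deriv_comp_F_mult_density_sq_nonneg)
    show "((\<lambda>u. (1 - q) ^ d * gfun n j u - q ^ d * gfun n k u) has_real_derivative H' u) (at u)" for u
      unfolding H'_def by (intro DERIV_diff DERIV_cmult has_real_derivative_gfun)
    show "continuous_on UNIV H'" unfolding H'_def by (intro continuous_intros continuous_on_dgfun)
  qed (use gfun_single_crossing[OF jk q] in \<open>simp_all add: q_def d_def\<close>)
  also have "(LINT t|lborel. H' (F t) * (f t)\<^sup>2) = (1 - q) ^ d * J j - q ^ d * J k"
    unfolding J_def H'_def left_diff_distrib mult.assoc
    by (simp add: integrable_dgfun_comp_F)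
  finally have ineq: "q ^ d * J k \<le> (1 - q) ^ d * J j" by simp
  have "0 < J k" using pos by (simp add: beta_eq_integral J_def zero_less_mult_iff)
  moreover have "0 < d" using jk by (simp add: d_def)
  ultimately have "q < 1" using ineq q by (cases "q = 1") (auto simp: zero_power)
  then have "0 < (1 - q) ^ d" by simp
  moreover have "0 \<le> (1 - q) ^ d * J j"
    using ineq \<open>0 < J k\<close> q by (smt (verit) mult_nonneg_nonneg zero_le_power)
  ultimately have "0 \<le> J j" by (simp add: zero_le_mult_iff)
  then show ?thesis by (simp add: beta_eq_integral J_def)
qed

end

definition equal_prizes :: "nat \<Rightarrow> nat \<Rightarrow> real" where
  "equal_prizes k s = (if 1 \<le> s \<and> s \<le> k then 1 / real k else 0)"

lemma sum_if_le_eq: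
  fixes n k :: nat
  shows "(\<Sum>r=1..n. if r \<le> k then g r else 0) = (\<Sum>r=1..min n k. g r)"
proof -
  have "(\<Sum>r=1..n. if r \<le> k then g r else 0) = (\<Sum>r\<in>{r\<in>{1..n}. r \<le> k}. g r)"
    by (rule sum.inter_filter[symmetric]) simp
  also have "{r\<in>{1..n}. r \<le> k} = {1..min n k}" by auto
  finally show ?thesis .
qed

lemma equal_prizes_in_Vset:
  assumes "1 \<le> k" "k \<le> n"
  shows "equal_prizes k \<in> Vset n"
proof -
  have "(\<Sum>r=1..n. equal_prizes k r) = (\<Sum>r=1..n. if r \<le> k then 1 / real k else 0)"
    by (intro sum.cong) (auto simp: equal_prizes_def)
  also have "\<dots> = 1"
    using sum_if_le_eq[where n=n and k=k and g="\<lambda>_. 1 / real k"] assms by (simp add: min_absorb2)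
  finally show ?thesis using assms by (auto simp: Vset_def equal_prizes_def)
qed

lemma Rfun_equal_prizes:
  assumes "1 \<le> k" "k \<le> n"
  shows "Rfun n F f (equal_prizes k) = Bsum n F f k / real k"
proof -
  have "Rfun n F f (equal_prizes k) = (\<Sum>r=1..n. if r \<le> k then beta n F f r / real k else 0)"
    unfolding Rfun_def by (intro sum.cong) (auto simp: equal_prizes_def)
  also have "\<dots> = (\<Sum>r=1..k. beta n F f r / real k)"
    using sum_if_le_eq[where n=n and k=k and g="\<lambda>r. beta n F f r / real k"] assms by (simp add: min_absorb2)
  also have "\<dots> = Bsum n F f k / real k"
    by (simp add: Bsum_def sum_divide_distrib)
  finally show ?thesis .
qed

lemma Bsum_split:
  assumes "k \<le> l"
  shows "Bsum n F f l = Bsum n F f k + (\<Sum>r=Suc k..l. beta n F f r)"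
proof -
  have "{1..l} = {1..k} \<union> {Suc k..l}" using assms by auto
  then show ?thesis by (simp add: Bsum_def sum.union_disjoint)
qed

lemma Lfun_equal_prizes:
  assumes k: "1 \<le> k" "k \<le> n" and total: "Bsum n F f n = 0"
  shows "Lfun n F f (equal_prizes k) = (2 * real k - real n) * Bsum n F f k / (real n * real k)"
proof -
  let ?b = "beta n F f" and ?B = "Bsum n F f"
  have inner: "(\<Sum>s=1..<r. (?b r + ?b s) * (equal_prizes k s - equal_prizes k r))
      = (if k < r then ?b r + ?B k / real k else 0)" for r
  proof (cases "k < r")
    case True
    then have "(\<Sum>s=1..<r. (?b r + ?b s) * (equal_prizes k s - equal_prizes k r))
        = (\<Sum>s=1..r - 1. if s \<le> k then (?b r + ?b s) / real k else 0)"
      by (intro sum.cong) (auto simp: equal_prizes_def)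
    also have "\<dots> = (\<Sum>s=1..k. (?b r + ?b s) / real k)"
      using sum_if_le_eq[where n="r - 1" and k=k and g="\<lambda>s. (?b r + ?b s) / real k"] True
      by (simp add: min_absorb2)
    also have "\<dots> = ?b r + ?B k / real k"
      using k by (simp add: Bsum_def sum.distrib add_divide_distrib sum_divide_distrib)
    finally show ?thesis using True by simp
  qed (auto simp: equal_prizes_def intro!: sum.neutral)
  have "(\<Sum>r=1..n. \<Sum>s=1..<r. (?b r + ?b s) * (equal_prizes k s - equal_prizes k r))
      = (\<Sum>r=1..n. if k < r then ?b r + ?B k / real k else 0)"
    by (simp only: inner)
  also have "\<dots> = (\<Sum>r=Suc k..n. ?b r + ?B k / real k)"
    using k by (intro sum.mono_neutral_cong_right) auto
  also have "\<dots> = - ?B k + real (n - k) * ?B k / real k"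
    using Bsum_split[OF k(2), of n F f] total by (simp add: sum.distrib)
  finally show ?thesis
    using k by (simp add: Lfun_def of_nat_diff field_simps)
qed

lemma Mfun_equal_prizes:
  assumes "1 \<le> k" "k \<le> n" "Bsum n F f n = 0"
  shows "Mfun n F f (equal_prizes k) \<theta> = Afun n F f k \<theta>"
  unfolding Mfun_def Afun_def Rfun_equal_prizes[OF assms(1,2)] Lfun_equal_prizes[OF assms]
  using assms by (simp add: field_simps)

lemma Rfun_sum: "Rfun n F f (\<lambda>s. \<Sum>k\<in>K. w k * V k s) = (\<Sum>k\<in>K. w k * Rfun n F f (V k))"
  unfolding Rfun_def by (simp add: sum_distrib_left mult_ac sum.swap[of _ K])

lemma Lfun_sum: "Lfun n F f (\<lambda>s. \<Sum>k\<in>K. w k * V k s) = (\<Sum>k\<in>K. w k * Lfun n F f (V k))"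
proof -
  let ?b = "beta n F f"
  have "(?b r + ?b s) * ((\<Sum>k\<in>K. w k * V k s) - (\<Sum>k\<in>K. w k * V k r))
      = (\<Sum>k\<in>K. w k * ((?b r + ?b s) * (V k s - V k r)))" for r s
    by (simp add: sum_distrib_left algebra_simps flip: sum_subtractf)
  then show ?thesis
    unfolding Lfun_def by (simp add: sum_distrib_left sum.swap[of _ K] mult_ac)
qed

lemma Rfun_cong: "(\<And>s. s \<in> {1..n} \<Longrightarrow> v s = v' s) \<Longrightarrow> Rfun n F f v = Rfun n F f v'"
  unfolding Rfun_def by (intro sum.cong) auto

lemma Lfun_cong: "(\<And>s. s \<in> {1..n} \<Longrightarrow> v s = v' s) \<Longrightarrow> Lfun n F f v = Lfun n F f v'"
  unfolding Lfun_def by (intro arg_cong[where f="\<lambda>x. _ * x"] sum.cong refl) auto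

text \<open>Each \<open>v \<in> Vset n\<close> is the convex combination of the \<open>equal_prizes k\<close> with weights
  \<open>k (v k - v (k + 1))\<close>, where \<open>v (n + 1)\<close> counts as 0.\<close>

definition prize_weight :: "nat \<Rightarrow> (nat \<Rightarrow> real) \<Rightarrow> nat \<Rightarrow> real" where
  "prize_weight n v k = real k * (v k - (if k < n then v (Suc k) else 0))"

lemma sum_prize_weight_equal_prizes:
  assumes "s \<in> {1..n}"
  shows "(\<Sum>k=1..n. prize_weight n v k * equal_prizes k s) = v s"
proof -
  define v' where "v' k = (if k \<le> n then v k else 0)" for k
  have "(\<Sum>k=1..n. prize_weight n v k * equal_prizes k s) = (\<Sum>k=s..n. v' k - v' (Suc k))"
    using assms by (intro sum.mono_neutral_cong_right)
      (auto simp: prize_weight_def equal_prizes_def v'_def)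
  also have "\<dots> = - (\<Sum>k=s..n. v' (Suc k) - v' k)"
    by (simp add: sum_negf[symmetric])
  also have "\<dots> = v' s - v' (Suc n)"
    using sum_Suc_diff[of s n v'] assms by simp
  finally show ?thesis using assms by (simp add: v'_def)
qed

lemma prize_weight_nonneg: "v \<in> Vset n \<Longrightarrow> k \<in> {1..n} \<Longrightarrow> 0 \<le> prize_weight n v k"
  by (auto simp: Vset_def prize_weight_def)

lemma sum_prize_weight: "v \<in> Vset n \<Longrightarrow> (\<Sum>k=1..n. prize_weight n v k) = 1"
proof -
  assume "v \<in> Vset n"
  have tel: "(\<Sum>k=1..N. real k * (a k - a (Suc k))) = (\<Sum>k=1..N. a k) - real N * a (Suc N)"
    for N and a :: "nat \<Rightarrow> real" by (induction N) (auto simp: algebra_simps)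
  define v' where "v' k = (if k \<le> n then v k else 0)" for k
  have "(\<Sum>k=1..n. prize_weight n v k) = (\<Sum>k=1..n. real k * (v' k - v' (Suc k)))"
    by (intro sum.cong) (auto simp: prize_weight_def v'_def)
  also have "\<dots> = (\<Sum>k=1..n. v' k) - real n * v' (Suc n)" by (rule tel)
  also have "\<dots> = (\<Sum>k=1..n. v k)" by (simp add: v'_def)
  finally show ?thesis using \<open>v \<in> Vset n\<close> by (simp add: Vset_def)
qed

lemma Mfun_eq_sum_prize_weight:
  assumes "v \<in> Vset n"
  shows "Mfun n F f v \<theta> = (\<Sum>k=1..n. prize_weight n v k * Mfun n F f (equal_prizes k) \<theta>)"
proof -
  let ?v = "\<lambda>s. \<Sum>k=1..n. prize_weight n v k * equal_prizes k s"
  have "Rfun n F f v = Rfun n F f ?v" "Lfun n F f v = Lfun n F f ?v"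
    by (rule Rfun_cong Lfun_cong, rule sum_prize_weight_equal_prizes[symmetric], assumption)+
  then show ?thesis
    unfolding Mfun_def Rfun_sum Lfun_sum by (simp add: sum.distrib sum_distrib_left algebra_simps)
qed

definition Amax :: "nat \<Rightarrow> (real \<Rightarrow> real) \<Rightarrow> (real \<Rightarrow> real) \<Rightarrow> real \<Rightarrow> real" where
  "Amax n F f \<theta> = Max ((\<lambda>k. Afun n F f k \<theta>) ` {1..n})"

lemma Afun_le_Amax: "k \<in> {1..n} \<Longrightarrow> Afun n F f k \<theta> \<le> Amax n F f \<theta>"
  by (auto simp: Amax_def)

lemma Amax_attained:
  assumes "1 \<le> n"
  shows "\<exists>k\<in>{1..n}. Amax n F f \<theta> = Afun n F f k \<theta>"
proof -
  have "Amax n F f \<theta> \<in> (\<lambda>k. Afun n F f k \<theta>) ` {1..n}"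
    unfolding Amax_def using assms by (intro Max_in) auto
  then show ?thesis by auto
qed

lemma Mstar_eq_Amax:
  assumes "1 \<le> n" and total: "Bsum n F f n = 0"
  shows "Mstar n F f \<theta> = Amax n F f \<theta>"
  unfolding Mstar_def
proof (rule cSup_eq_maximum)
  obtain k where k: "k \<in> {1..n}" "Amax n F f \<theta> = Afun n F f k \<theta>"
    using Amax_attained[OF assms(1)] by blast
  then show "Amax n F f \<theta> \<in> (\<lambda>v. Mfun n F f v \<theta>) ` Vset n"
    using equal_prizes_in_Vset Mfun_equal_prizes total by (auto intro!: image_eqI[of _ _ "equal_prizes k"])
  fix x assume "x \<in> (\<lambda>v. Mfun n F f v \<theta>) ` Vset n"
  then obtain v where v: "v \<in> Vset n" and x: "x = Mfun n F f v \<theta>" by auto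
  have "x = (\<Sum>k=1..n. prize_weight n v k * Afun n F f k \<theta>)"
    unfolding x Mfun_eq_sum_prize_weight[OF v] using Mfun_equal_prizes total by (intro sum.cong) auto
  also have "\<dots> \<le> (\<Sum>k=1..n. prize_weight n v k * Amax n F f \<theta>)"
    using prize_weight_nonneg[OF v] Afun_le_Amax by (intro sum_mono mult_left_mono) auto
  also have "\<dots> = Amax n F f \<theta>"
    using sum_prize_weight[OF v] by (simp flip: sum_distrib_right)
  finally show "x \<le> Amax n F f \<theta>" .
qed


lemma Afun_eq:
  "1 \<le> k \<Longrightarrow> 1 \<le> n \<Longrightarrow> Afun n F f k \<theta> = Bsum n F f k * ((1 - \<theta>) / real k + 2 * \<theta> / real n)"
  by (simp add: Afun_def field_simps)

lemma Afun_weight_pos: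
  assumes "\<theta> \<in> {0..1}" "1 \<le> k" "1 \<le> n"
  shows "0 < (1 - \<theta>) / real k + 2 * \<theta> / real n"
proof (cases "\<theta> = 1")
  case False
  then have "0 < (1 - \<theta>) / real k" using assms by simp
  moreover have "0 \<le> 2 * \<theta> / real n" using assms by simp
  ultimately show ?thesis by linarith
qed (use assms in simp)

lemma Afun_diff:
  "1 \<le> k \<Longrightarrow> 1 \<le> n \<Longrightarrow>
     Afun n F f k \<theta>' - Afun n F f k \<theta> = Bsum n F f k * (\<theta>' - \<theta>) * (2 / real n - 1 / real k)"
  by (simp add: Afun_def field_simps)

lemma Afun_minus_ratio:
  "Afun n F f k \<theta> - Bsum n F f k / real k = \<theta> * (2 * real k / real n - 1) * (Bsum n F f k / real k)"
  by (simp add: Afun_def algebra_simps)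

lemma Afun_at_1: "1 \<le> k \<Longrightarrow> Afun n F f k 1 = 2 * Bsum n F f k / real n"
  by (simp add: Afun_def field_simps)

lemma Bsum_pos_if_Afun_pos:
  assumes "k \<in> {1..n}" "\<theta> \<in> {0..1}" "0 < Afun n F f k \<theta>"
  shows "0 < Bsum n F f k"
  using assms Afun_weight_pos[of \<theta> k n] by (simp add: Afun_eq zero_less_mult_iff)

text \<open>The slope of \<open>Afun n F f k\<close> in \<open>\<theta>\<close> has the sign of \<open>2 k - n\<close>.\<close>

lemma strict_mono_on_Amax:
  fixes T :: "real set"
  assumes "\<And>\<theta>. \<theta> \<in> T \<Longrightarrow>
      \<exists>k\<in>{1..n}. n < 2 * k \<and> 0 < Bsum n F f k \<and> Afun n F f k \<theta> = Amax n F f \<theta>"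
  shows "strict_mono_on T (Amax n F f)"
proof (rule strict_mono_onI)
  fix \<theta> \<theta>' assume "\<theta> \<in> T" "\<theta>' \<in> T" "\<theta> < \<theta>'"
  then obtain k where k: "k \<in> {1..n}" "n < 2 * k" "0 < Bsum n F f k"
    and max: "Afun n F f k \<theta> = Amax n F f \<theta>" using assms by blast
  have "1 / real k < 2 / real n" using k by (simp add: field_simps)
  then have "0 < Bsum n F f k * (\<theta>' - \<theta>) * (2 / real n - 1 / real k)"
    using k \<open>\<theta> < \<theta>'\<close> by simp
  moreover have "Afun n F f k \<theta>' - Afun n F f k \<theta>
      = Bsum n F f k * (\<theta>' - \<theta>) * (2 / real n - 1 / real k)"
    using k by (intro Afun_diff) auto
  ultimately have "Afun n F f k \<theta> < Afun n F f k \<theta>'" by linarith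
  then show "Amax n F f \<theta> < Amax n F f \<theta>'" using max Afun_le_Amax[OF k(1)] by (metis order_less_le_trans)
qed

lemma antimono_on_Amax:
  assumes n: "2 \<le> n" and Bsum_nonneg: "\<And>k. k \<in> {1..n} \<Longrightarrow> 0 \<le> Bsum n F f k"
    and beta_nonpos: "\<And>i. i \<in> {1..n} \<Longrightarrow> n div 2 < i \<Longrightarrow> beta n F f i \<le> 0"
  shows "antimono_on {0..1} (Amax n F f)"
proof (rule monotone_onI)
  fix \<theta> \<theta>' :: real assume \<theta>: "\<theta> \<in> {0..1}" "\<theta>' \<in> {0..1}" "\<theta> \<le> \<theta>'"
  define h where "h = n div 2"
  have h: "h \<in> {1..n}" "2 * h \<le> n" using n by (auto simp: h_def)
  have lower_decreasing: "Afun n F f k \<theta>' \<le> Afun n F f k \<theta>" if "k \<in> {1..n}" "2 * k \<le> n" for k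
  proof -
    have "2 / real n - 1 / real k \<le> 0" using that by (simp add: field_simps)
    then have "Bsum n F f k * (\<theta>' - \<theta>) * (2 / real n - 1 / real k) \<le> 0"
      using Bsum_nonneg[OF that(1)] \<theta> by (simp add: mult_nonneg_nonpos)
    moreover have "Afun n F f k \<theta>' - Afun n F f k \<theta>
        = Bsum n F f k * (\<theta>' - \<theta>) * (2 / real n - 1 / real k)"
      using that by (intro Afun_diff) auto
    ultimately show ?thesis by linarith
  qed
  have upper_dominated: "Afun n F f k \<theta>' \<le> Afun n F f h \<theta>'" if "k \<in> {1..n}" "h \<le> k" for k
  proof -
    have "Bsum n F f k = Bsum n F f h + (\<Sum>i=Suc h..k. beta n F f i)"
      using that by (intro Bsum_split)
    moreover have "(\<Sum>i=Suc h..k. beta n F f i) \<le> 0"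
      using that by (intro sum_nonpos beta_nonpos) (auto simp: h_def)
    ultimately have "Bsum n F f k \<le> Bsum n F f h" by simp
    moreover have "(1 - \<theta>') / real k \<le> (1 - \<theta>') / real h" using that h \<theta> by (intro divide_left_mono) auto
    ultimately show ?thesis
      using that h \<theta> Bsum_nonneg[OF h(1)] Afun_weight_pos[of \<theta>' k n]
      by (simp add: Afun_eq mult_mono)
  qed
  obtain k where k: "k \<in> {1..n}" "Amax n F f \<theta>' = Afun n F f k \<theta>'"
    using Amax_attained[of n F f \<theta>'] n by auto
  show "Amax n F f \<theta>' \<le> Amax n F f \<theta>"
  proof (cases "2 * k \<le> n")
    case True
    then show ?thesis using k lower_decreasing Afun_le_Amax[OF k(1), of F f \<theta>] by fastforce
  next
    case False
    then have "h \<le> k" by (simp add: h_def)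
    then have "Afun n F f k \<theta>' \<le> Afun n F f h \<theta>" using upper_dominated[OF k(1)] lower_decreasing[OF h]
      by (meson order.trans)
    then show ?thesis using k Afun_le_Amax[OF h(1)] by (metis order.trans)
  qed
qed

text \<open>A best-ratio rank \<open>r\<^sub>0\<close> weakly dominates every lower rank, so some upper rank always
  attains the maximum.\<close>

lemma strict_mono_on_Amax_best_ratio_upper:
  assumes n: "2 \<le> n" and Bsum_nonneg: "\<And>k. k \<in> {1..n} \<Longrightarrow> 0 \<le> Bsum n F f k"
    and r0: "r0 \<in> {1..n-1}" "\<And>r. r \<in> {1..n-1} \<Longrightarrow> Bsum n F f r / real r \<le> Bsum n F f r0 / real r0"
    and pos: "0 < Bsum n F f r0" and upper: "n < 2 * r0"
  shows "strict_mono_on {0..1} (Amax n F f)"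
proof (rule strict_mono_on_Amax)
  fix \<theta> :: real assume \<theta>: "\<theta> \<in> {0..1}"
  have r0n: "r0 \<in> {1..n}" using r0 by auto
  have A_r0_pos: "0 < Afun n F f r0 \<theta>"
    using pos Afun_weight_pos[OF \<theta>, of r0 n] r0n n by (simp add: Afun_eq)
  obtain k where k: "k \<in> {1..n}" "Amax n F f \<theta> = Afun n F f k \<theta>"
    using Amax_attained[of n F f \<theta>] n by auto
  show "\<exists>k\<in>{1..n}. n < 2 * k \<and> 0 < Bsum n F f k \<and> Afun n F f k \<theta> = Amax n F f \<theta>"
  proof (cases "n < 2 * k")
    case True
    then show ?thesis
      using k A_r0_pos Afun_le_Amax[OF r0n, of F f \<theta>] Bsum_pos_if_Afun_pos[OF k(1) \<theta>] by auto
  next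
    case False
    then have kn1: "k \<in> {1..n-1}" using k n by auto
    have "2 * real k / real n - 1 \<le> 0" using False n by (simp add: field_simps)
    then have "\<theta> * (2 * real k / real n - 1) * (Bsum n F f k / real k) \<le> 0"
      using \<theta> Bsum_nonneg[OF k(1)] by (intro mult_nonpos_nonneg mult_nonneg_nonpos) auto
    then have "Afun n F f k \<theta> \<le> Bsum n F f k / real k"
      using Afun_minus_ratio[of n F f k \<theta>] by linarith
    also have "\<dots> \<le> Bsum n F f r0 / real r0" by (rule r0(2)[OF kn1])
    also have "\<dots> \<le> Afun n F f r0 \<theta>"
    proof -
      have "0 \<le> 2 * real r0 / real n - 1" using upper n by (simp add: field_simps)
      then have "0 \<le> \<theta> * (2 * real r0 / real n - 1) * (Bsum n F f r0 / real r0)"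
        using \<theta> pos by simp
      then show ?thesis using Afun_minus_ratio[of n F f r0 \<theta>] by linarith
    qed
    finally have "Afun n F f r0 \<theta> = Amax n F f \<theta>"
      using k Afun_le_Amax[OF r0n, of F f \<theta>] by simp
    then show ?thesis using r0n upper pos by blast
  qed
qed

text \<open>\<open>Afun n F f k\<close> is affine in \<open>\<theta>\<close>, so strict inequalities at \<open>\<theta> = 1\<close> persist nearby.\<close>

lemma Afun_less_near_1:
  assumes "finite S" and less: "\<And>j. j \<in> S \<Longrightarrow> Afun n F f j 1 < Afun n F f r 1"
  shows "\<exists>\<theta>b. 0 \<le> \<theta>b \<and> \<theta>b < 1 \<and> (\<forall>\<theta>\<in>{\<theta>b..1}. \<forall>j\<in>S. Afun n F f j \<theta> < Afun n F f r \<theta>)"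
proof -
  have "\<forall>\<^sub>F \<theta> in at 1. \<forall>j\<in>S. 0 < Afun n F f r \<theta> - Afun n F f j \<theta>"
  proof (rule eventually_ball_finite[OF \<open>finite S\<close>], rule ballI)
    fix j assume "j \<in> S"
    have "((\<lambda>\<theta>. Afun n F f r \<theta> - Afun n F f j \<theta>) \<longlongrightarrow> Afun n F f r 1 - Afun n F f j 1) (at 1)"
      unfolding Afun_def by (intro tendsto_intros)
    then show "\<forall>\<^sub>F \<theta> in at 1. 0 < Afun n F f r \<theta> - Afun n F f j \<theta>"
      using less[OF \<open>j \<in> S\<close>] by (intro order_tendstoD(1)) auto
  qed
  then obtain d where "0 < d"
    and near: "\<And>\<theta> j. \<theta> \<noteq> 1 \<Longrightarrow> dist \<theta> 1 < d \<Longrightarrow> j \<in> S \<Longrightarrow> Afun n F f j \<theta> < Afun n F f r \<theta>"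
    by (auto simp: eventually_at)
  have "Afun n F f j \<theta> < Afun n F f r \<theta>" if "\<theta> \<in> {max 0 (1 - d / 2)..1}" "j \<in> S" for \<theta> j
    using that less near[of \<theta> j] \<open>0 < d\<close> by (cases "\<theta> = 1") (auto simp: dist_real_def)
  moreover have "0 \<le> max 0 (1 - d / 2)" "max 0 (1 - d / 2) < 1" using \<open>0 < d\<close> by auto
  ultimately show ?thesis by blast
qed

text \<open>At \<open>\<theta> = 1\<close> the maximum is \<open>2 B\<^sub>r / n\<close>, and single crossing makes \<open>B\<^sub>r\<^sub>h\<close> strictly larger
  than every \<open>B\<^sub>j\<close> with \<open>2 j \<le> n\<close>.\<close>

lemma strict_mono_on_Amax_near_1:
  assumes n: "2 \<le> n" and Bsum_nonneg: "\<And>k. k \<in> {1..n} \<Longrightarrow> 0 \<le> Bsum n F f k"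
    and rh: "rh \<in> {1..n}" "0 < beta n F f rh" "n < 2 * rh"
    and below: "\<And>j. 1 \<le> j \<Longrightarrow> j < rh \<Longrightarrow> 0 \<le> beta n F f j"
  obtains \<theta>b where "0 \<le> \<theta>b" "\<theta>b < 1" "strict_mono_on {\<theta>b..1} (Amax n F f)"
proof -
  define S where "S = {j\<in>{1..n}. 2 * j \<le> n}"
  have S_less: "Bsum n F f j < Bsum n F f rh" if "j \<in> S" for j
  proof -
    have "j < rh" using that rh by (auto simp: S_def)
    then have "Bsum n F f rh = Bsum n F f j + (\<Sum>i=Suc j..rh. beta n F f i)" by (intro Bsum_split) simp
    moreover have "beta n F f rh \<le> (\<Sum>i=Suc j..rh. beta n F f i)"
      using \<open>j < rh\<close> that by (intro member_le_sum below) (auto simp: S_def)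
    ultimately show ?thesis using rh by simp
  qed
  have "1 \<in> S" using n by (simp add: S_def)
  moreover have "0 \<le> Bsum n F f 1" using n by (intro Bsum_nonneg) auto
  ultimately have B_rh: "0 < Bsum n F f rh" using S_less by fastforce
  have "finite S" by (simp add: S_def)
  moreover have "Afun n F f j 1 < Afun n F f rh 1" if "j \<in> S" for j
    using S_less[OF that] that rh n by (simp add: Afun_at_1 S_def divide_strict_right_mono)
  ultimately obtain \<theta>b where \<theta>b: "0 \<le> \<theta>b" "\<theta>b < 1"
    and beats: "\<forall>\<theta>\<in>{\<theta>b..1}. \<forall>j\<in>S. Afun n F f j \<theta> < Afun n F f rh \<theta>"
    using Afun_less_near_1[of S n F f rh] by auto
  have "strict_mono_on {\<theta>b..1} (Amax n F f)"
  proof (rule strict_mono_on_Amax)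
    fix \<theta> assume \<theta>: "\<theta> \<in> {\<theta>b..1}"
    then have \<theta>01: "\<theta> \<in> {0..1}" using \<theta>b by auto
    obtain k where k: "k \<in> {1..n}" "Amax n F f \<theta> = Afun n F f k \<theta>"
      using Amax_attained[of n F f \<theta>] n by auto
    have "Afun n F f rh \<theta> \<le> Afun n F f k \<theta>" using k Afun_le_Amax[OF rh(1), of F f \<theta>] by simp
    then have "k \<notin> S" using beats \<theta> by fastforce
    moreover have "0 < Afun n F f rh \<theta>"
      using B_rh Afun_weight_pos[OF \<theta>01, of rh n] rh n by (simp add: Afun_eq)
    ultimately have "n < 2 * k" "0 < Bsum n F f k"
      using k \<open>Afun n F f rh \<theta> \<le> Afun n F f k \<theta>\<close> Bsum_pos_if_Afun_pos[OF k(1) \<theta>01]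
      by (auto simp: S_def)
    then show "\<exists>k\<in>{1..n}. n < 2 * k \<and> 0 < Bsum n F f k \<and> Afun n F f k \<theta> = Amax n F f \<theta>"
      using k by auto
  qed
  with \<theta>b that show ?thesis by blast
qed

lemma Max_positive_beta:
  assumes "r \<in> {1..n}" "0 < Bsum n F f r"
  defines "rh \<equiv> Max {r \<in> {1..n}. 0 < beta n F f r}"
  shows "rh \<in> {1..n}" "0 < beta n F f rh" "\<And>i. i \<in> {1..n} \<Longrightarrow> rh < i \<Longrightarrow> beta n F f i \<le> 0"
proof -
  let ?P = "{r \<in> {1..n}. 0 < beta n F f r}"
  have "?P \<noteq> {}"
  proof
    assume "?P = {}"
    then have "Bsum n F f r \<le> 0" using assms(1) by (auto simp: Bsum_def not_less intro!: sum_nonpos)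
    with assms(2) show False by simp
  qed
  then have "rh \<in> ?P" unfolding rh_def by (intro Max_in) auto
  then show "rh \<in> {1..n}" "0 < beta n F f rh" by auto
  show "beta n F f i \<le> 0" if "i \<in> {1..n}" "rh < i" for i
  proof (rule ccontr)
    assume "\<not> beta n F f i \<le> 0"
    then have "i \<le> rh" using that(1) unfolding rh_def by (intro Max_ge) auto
    with that(2) show False by simp
  qed
qed

context unimodal_density
begin

lemma Mstar_fun_eq_Amax: "1 \<le> n \<Longrightarrow> Mstar n F f = Amax n F f"
  by (intro ext Mstar_eq_Amax Bsum_last)

lemma last_positive_beta:
  assumes "2 \<le> n"
  defines "rh \<equiv> Max {r \<in> {1..n}. 0 < beta n F f r}"
  shows "rh \<in> {1..n}" "0 < beta n F f rh" "\<And>i. i \<in> {1..n} \<Longrightarrow> rh < i \<Longrightarrow> beta n F f i \<le> 0"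
    and "\<And>j. 1 \<le> j \<Longrightarrow> j < rh \<Longrightarrow> 0 \<le> beta n F f j"
proof -
  obtain r where "r \<in> {1..n-1}" "0 < Bsum n F f r" using Bsum_pos_exists[OF assms(1)] by blast
  then have "r \<in> {1..n}" "0 < Bsum n F f r" by auto
  from Max_positive_beta[OF this] show rh: "rh \<in> {1..n}" "0 < beta n F f rh"
    and "\<And>i. i \<in> {1..n} \<Longrightarrow> rh < i \<Longrightarrow> beta n F f i \<le> 0" by (simp_all add: rh_def)
  show "0 \<le> beta n F f j" if "1 \<le> j" "j < rh" for j
    using that rh by (intro beta_nonneg_below_pos[of j rh n]) auto
qed

lemma Mstar_antimono:
  assumes "2 \<le> n" "Max {r \<in> {1..n}. 0 < beta n F f r} \<le> n div 2"
  shows "antimono_on {0..1} (Mstar n F f)"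
proof -
  have "antimono_on {0..1} (Amax n F f)"
  proof (rule antimono_on_Amax[OF assms(1)])
    show "0 \<le> Bsum n F f k" if "k \<in> {1..n}" for k using that by (intro Bsum_nonneg) auto
    show "beta n F f i \<le> 0" if "i \<in> {1..n}" "n div 2 < i" for i
      using that assms last_positive_beta(3)[OF assms(1)] by simp
  qed
  then show ?thesis using assms(1) by (simp add: Mstar_fun_eq_Amax)
qed

lemma Mstar_strict_mono:
  assumes n: "2 \<le> n" and r0: "r0 \<in> {1..n-1}"
    and r0_max: "\<And>r. r \<in> {1..n-1} \<Longrightarrow> Bsum n F f r / real r \<le> Bsum n F f r0 / real r0"
    and "(n + 1) div 2 < r0"
  shows "strict_mono_on {0..1} (Mstar n F f)"
proof -
  obtain r where r: "r \<in> {1..n-1}" "0 < Bsum n F f r" using Bsum_pos_exists[OF n] by blast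
  then have "0 < Bsum n F f r / real r" by simp
  also have "\<dots> \<le> Bsum n F f r0 / real r0" by (rule r0_max[OF r(1)])
  finally have "0 < Bsum n F f r0" using r0 by (simp add: zero_less_divide_iff)
  moreover have "n < 2 * r0" using assms(4) by presburger
  ultimately have "strict_mono_on {0..1} (Amax n F f)"
    using n r0 r0_max by (intro strict_mono_on_Amax_best_ratio_upper) (auto intro: Bsum_nonneg)
  then show ?thesis using n by (simp add: Mstar_fun_eq_Amax)
qed

lemma Mstar_strict_mono_near_1:
  assumes n: "2 \<le> n" and "(n + 1) div 2 < Max {r \<in> {1..n}. 0 < beta n F f r}"
  shows "\<exists>\<theta>b. 0 \<le> \<theta>b \<and> \<theta>b < 1 \<and> strict_mono_on {\<theta>b..1} (Mstar n F f)"
proof -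
  have "n < 2 * Max {r \<in> {1..n}. 0 < beta n F f r}" using assms(2) by presburger
  moreover have "0 \<le> Bsum n F f k" if "k \<in> {1..n}" for k using that by (intro Bsum_nonneg) auto
  ultimately obtain \<theta>b where "0 \<le> \<theta>b" "\<theta>b < 1" "strict_mono_on {\<theta>b..1} (Amax n F f)"
    using strict_mono_on_Amax_near_1[OF n _ last_positive_beta(1,2)[OF n] _ last_positive_beta(4)[OF n]]
    by blast
  then show ?thesis using n by (auto simp: Mstar_fun_eq_Amax)
qed

end

theorem corollary2:
  fixes n :: nat and F f :: "real \<Rightarrow> real"
    and c c' :: "real \<Rightarrow> real" and xbar :: real
    and xss :: "real \<Rightarrow> real" and r0 :: nat
  assumes n2: "2 \<le> n"
    and f_meas: "f \<in> borel_measurable lborel"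
    and f_nonneg: "\<And>t. 0 \<le> f t"
    and f_int: "integrable lborel f"
    and f_total: "(LINT t|lborel. f t) = 1"
    and F_cdf: "\<And>x. F x = (LINT t:{..x}|lborel. f t)"
    and finite_ints: "\<And>r. r \<in> {1..n} \<Longrightarrow>
          integrable lborel (\<lambda>t. deriv (gfun n r) (F t) * (f t)\<^sup>2)"
    and f_unimodal: "unimodal_on UNIV f"
    and h_unimodal: "unimodal_on {t. F t < 1} (failure_rate F f)"
    and xbar_pos: "0 < xbar" and c_xbar: "c xbar = 1"
    and c_deriv: "\<And>x. x \<in> {0..xbar} \<Longrightarrow> (c has_real_derivative c' x) (at x within {0..xbar})"
    and c_incr: "strict_mono_on {0..xbar} c"
    and c_convex: "strictly_convex_on {0..xbar} c"
    and c0: "c 0 = 0" and c'0: "c' 0 = 0"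
    and r0_mem: "r0 \<in> {1..n-1}"
    and r0_max: "\<And>r. r \<in> {1..n-1} \<Longrightarrow> Bsum n F f r / real r \<le> Bsum n F f r0 / real r0"
    and xss_def: "\<And>\<theta>. \<theta> \<in> {0..1} \<Longrightarrow> xss \<theta> \<in> {0..xbar} \<and> c' (xss \<theta>) = Mstar n F f \<theta>"
  shows
    "(Max {r \<in> {1..n}. 0 < beta n F f r} \<le> n div 2 \<longrightarrow>
        antimono_on {0..1} (Mstar n F f) \<and> antimono_on {0..1} xss)
     \<and> ((n + 1) div 2 < r0 \<longrightarrow>
        strict_mono_on {0..1} (Mstar n F f) \<and> strict_mono_on {0..1} xss)
     \<and> ((n + 1) div 2 < Max {r \<in> {1..n}. 0 < beta n F f r} \<longrightarrow>
        (\<exists>\<theta>b. 0 \<le> \<theta>b \<and> \<theta>b < 1 \<and>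
           strict_mono_on {\<theta>b..1} (Mstar n F f) \<and> strict_mono_on {\<theta>b..1} xss))"
proof -
  obtain m where "\<forall>x y. x \<le> y \<and> y \<le> m \<longrightarrow> f x \<le> f y" "\<forall>x y. m \<le> x \<and> x \<le> y \<longrightarrow> f y \<le> f x"
    using integrable_unimodal_has_mode[OF f_unimodal f_int f_nonneg] f_total by auto
  then interpret unimodal_density f F m
    by unfold_locales (use f_meas f_nonneg f_int f_total F_cdf in auto)
  have c'_mono: "strict_mono_on {0..xbar} c'"
    by (rule strictly_convex_on_deriv_strict_mono[OF c_deriv c_convex])
  have xss_strict_mono: "strict_mono_on T xss" if "T \<subseteq> {0..1}" "strict_mono_on T (Mstar n F f)" for T
  proof (rule strict_mono_on_if_comp_strict_mono[OF c'_mono _ that(2)])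
    show "xss \<theta> \<in> {0..xbar} \<and> c' (xss \<theta>) = Mstar n F f \<theta>" if "\<theta> \<in> T" for \<theta>
      using xss_def \<open>T \<subseteq> {0..1}\<close> that by blast
  qed
  have xss_antimono: "antimono_on {0..1} xss" if "antimono_on {0..1} (Mstar n F f)"
    using c'_mono xss_def that by (rule antimono_on_if_comp_antimono)
  have "antimono_on {0..1} (Mstar n F f) \<and> antimono_on {0..1} xss"
    if "Max {r \<in> {1..n}. 0 < beta n F f r} \<le> n div 2"
    using Mstar_antimono[OF n2 that] xss_antimono by blast
  moreover have "strict_mono_on {0..1} (Mstar n F f) \<and> strict_mono_on {0..1} xss"
    if "(n + 1) div 2 < r0"
    using Mstar_strict_mono[OF n2 r0_mem r0_max that] xss_strict_mono[of "{0..1}"] by blast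
  moreover have "\<exists>\<theta>b. 0 \<le> \<theta>b \<and> \<theta>b < 1 \<and> strict_mono_on {\<theta>b..1} (Mstar n F f)
                    \<and> strict_mono_on {\<theta>b..1} xss"
    if upper: "(n + 1) div 2 < Max {r \<in> {1..n}. 0 < beta n F f r}"
  proof -
    obtain \<theta>b where "0 \<le> \<theta>b" "\<theta>b < 1" "strict_mono_on {\<theta>b..1} (Mstar n F f)"
      using Mstar_strict_mono_near_1[OF n2 upper] by blast
    moreover from this have "strict_mono_on {\<theta>b..1} xss" by (intro xss_strict_mono) auto
    ultimately show ?thesis by blast
  qed
  ultimately show ?thesis by blast
qed

end
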